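(* Let $\mathcal{A}$ be a safe generalized timed automaton (GTA) without renamings, and let $\rho := (q_0,v_0) \xrightarrow{\delta_0,t_0} (q_1,v_1) \xrightarrow{\delta_1,t_1} \cdots$ be a non-Zeno run of $\mathcal{A}$. Then for every future clock $x$ of $\mathcal{A}$ and every index $i \ge 0$, if $v_i(x) \neq -\infty$, there exists $j \ge i$ such that $x$ is released in $t_j$.
   Context: Clocks and valuations: $X = X_F \uplus X_H$ is a finite set of clocks partitioned into future clocks $X_F$ and history clocks $X_H$; $0$ denotes an extra constant clock. Write $\overline{\mathbb{R}} = \mathbb{R}\cup\{-\infty,+\infty\}$, with $(+\infty)+\alpha=\alpha+(+\infty)=+\infty$ for all $\alpha$, $(-\infty)+\beta=\beta+(-\infty)=-\infty$ for $\beta\neq+\infty$, $-(+\infty)=-\infty$, $-(-\infty)=+\infty$. A valuation is a map $v: X\cup\{0\}\to\overline{\mathbb{R}}$ with $v(0)=0$, $v(x)\in\mathbb{R}_{\ge0}\cup\{+\infty\}$ for $x\in X_H$ and $v(x)\in\mathbb{R}_{\le 0}\cup\{-\infty\}$ for $x\in X_F$. Constraints $\Phi(X)$ are finite conjunctions of atomic constraints $x-y\triangleleft c$ with $x,y\in X\cup\{0\}$, ${\triangleleft}\in\{<,\le\}$, $c\in\mathbb{Z}\cup\{-\infty,+\infty\}$; $v\models x-y\triangleleft c$ iff $v(x)-v(y)\triangleleft c$. For $\delta\ge 0$, $v+\delta$ adds $\delta$ to every clock of $X$. For $R\subseteq X$, $[R]v$ is the set of valuations $v'$ with $v'(x)=0$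 for $x\in R\cap X_H$ and $v'(x)=v(x)$ for $x\notin R$ (clocks in $R\cap X_F$ get arbitrary values; they are "released"). A GTA without renamings is $\mathcal{A}=(Q,\Sigma,X,\Delta,\mathcal{I},Q_f)$: $Q$ finite set of states, $\Sigma$ finite alphabet, $\mathcal{I}$ a set of pairs $(q_0,g_0)$ with $q_0\in Q$, $g_0\in\Phi(X)$, $Q_f\subseteq Q$ Büchi states, and $\Delta$ a finite set of transitions $(q,a,\mathsf{prog},q')$ where $\mathsf{prog}=\mathsf{prog}_1;\dots;\mathsf{prog}_n$ with each $\mathsf{prog}_k$ either a guard $g\in\Phi(X)$ or a change $[R]$, $R\subseteq X$. Semantics of programs: $v\xrightarrow{g}v$ iff $v\models g$; $v\xrightarrow{[R]}v'$ iff $v'\in[R]v$; sequences compose. A future clock $x$ is released in transition $t$ if the program of $t$ contains some $[R]$ with $x\in R$. Configurations are pairs $(q,v)$; delay steps $(q,v)\xrightarrow{\delta}(q,v+\delta)$ are allowed when $v+\delta$ is a valuation (all future clocks $\le 0$); discrete steps $(q,v)\xrightarrow{t}(q',v')$ when $t=(q,a,\mathsf{prog},q')\in\Delta$ and $v\xrightarrow{\mathsf{prog}}v'$. A run is a sequence $(q_0,v_0)\xrightarrow{\delta_0,t_0}(q_1,v_1)\xrightarrow{\delta_1,t_1}\cdots$ (each step a delay $\delta_i$ followed by discrete transition $t_i$) starting from an initial configuration ($(q_0,g_0)\in\mathcal{I}$, $v_0\models g_0$). It is non-Zeno if $\sum_i\delta_i$ is unbounded. Safety: let $X_D\subseteq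 X_F$ be the set of future clocks occurring in some guard $x-y\triangleleft c$ of $\mathcal{A}$ with both $x,y\in X_F$. $\mathcal{A}$ is safe if in every transition program each clock of $X_D$ is checked by a guard of the program to be $0$ or $-\infty$ before it is released, and every initial guard $g_0$ forces each history clock to be $0$ or $+\infty$. *)

theory Defs
  imports "HOL-Library.Extended_Real"
begin

datatype 'c cvar = Zero | Clk 'c

datatype bnd = Fin int | PInf | NInf

fun bnd_val :: "bnd \<Rightarrow> ereal" where
  "bnd_val (Fin k) = ereal (real_of_int k)"
| "bnd_val PInf = \<infinity>"
| "bnd_val NInf = -\<infinity>"

text \<open>Atomic constraint  x - y < c  (strict = True) or  x - y <= c  (strict = False).\<close>
datatype 'c atom = Atom "'c cvar" "'c cvar" bool bnd

type_synonym 'c guard = "'c atom list"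

datatype 'c instr = Guard "'c guard" | Change "'c set"

type_synonym 'c prog = "'c instr list"

type_synonym 'c val = "'c \<Rightarrow> ereal"

record ('s, 'a, 'c) gta =
  states :: "'s set"
  alph   :: "'a set"
  fclocks :: "'c set"
  hclocks :: "'c set"
  trans  :: "('s \<times> 'a \<times> 'c prog \<times> 's) set"
  init   :: "('s \<times> 'c guard) set"
  buchi  :: "'s set"

definition clocks :: "('s, 'a, 'c) gta \<Rightarrow> 'c set" where
  "clocks A = fclocks A \<union> hclocks A"

fun cval :: "'c val \<Rightarrow> 'c cvar \<Rightarrow> ereal" where
  "cval v Zero = 0"
| "cval v (Clk x) = v x"

text \<open>Subtraction in ereal is a + (- b), matching the conventions of the paper.\<close>
fun sat_atom :: "'c val \<Rightarrow> 'c atom \<Rightarrow> bool" where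
  "sat_atom v (Atom x y s c) =
     (if s then cval v x - cval v y < bnd_val c else cval v x - cval v y \<le> bnd_val c)"

definition sat :: "'c val \<Rightarrow> 'c guard \<Rightarrow> bool" where
  "sat v g \<longleftrightarrow> (\<forall>a\<in>set g. sat_atom v a)"

fun atom_cvars :: "'c atom \<Rightarrow> 'c cvar set" where
  "atom_cvars (Atom x y s c) = {x, y}"

definition guard_clocks :: "'c guard \<Rightarrow> 'c set" where
  "guard_clocks g = {x. \<exists>a\<in>set g. Clk x \<in> atom_cvars a}"

definition is_val :: "('s, 'a, 'c) gta \<Rightarrow> 'c val \<Rightarrow> bool" where
  "is_val A v \<longleftrightarrow> (\<forall>x\<in>hclocks A. v x \<ge> 0) \<and> (\<forall>x\<in>fclocks A. v x \<le> 0)"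

definition delay :: "('s, 'a, 'c) gta \<Rightarrow> 'c val \<Rightarrow> real \<Rightarrow> 'c val" where
  "delay A v d = (\<lambda>x. if x \<in> clocks A then v x + ereal d else v x)"

definition change :: "('s, 'a, 'c) gta \<Rightarrow> 'c set \<Rightarrow> 'c val \<Rightarrow> 'c val set" where
  "change A R v = {v'. is_val A v' \<and> (\<forall>x \<in> R \<inter> hclocks A. v' x = 0)
                        \<and> (\<forall>x. x \<notin> R \<longrightarrow> v' x = v x)}"

fun prog_sem :: "('s, 'a, 'c) gta \<Rightarrow> 'c prog \<Rightarrow> 'c val \<Rightarrow> 'c val \<Rightarrow> bool" where
  "prog_sem A [] v v' \<longleftrightarrow> v' = v"
| "prog_sem A (Guard g # p) v v' \<longleftrightarrow> sat v g \<and> prog_sem A p v v'"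
| "prog_sem A (Change R # p) v v' \<longleftrightarrow> (\<exists>w \<in> change A R v. prog_sem A p w v')"

definition instr_clocks :: "'c instr \<Rightarrow> 'c set" where
  "instr_clocks i = (case i of Guard g \<Rightarrow> guard_clocks g | Change R \<Rightarrow> R)"

definition wf_gta :: "('s, 'a, 'c) gta \<Rightarrow> bool" where
  "wf_gta A \<longleftrightarrow>
     finite (states A) \<and> finite (alph A) \<and>
     finite (fclocks A) \<and> finite (hclocks A) \<and> fclocks A \<inter> hclocks A = {} \<and>
     finite (trans A) \<and>
     (\<forall>(q, a, p, q') \<in> trans A. q \<in> states A \<and> a \<in> alph A \<and> q' \<in> states A \<and>
        (\<forall>i \<in> set p. instr_clocks i \<subseteq> clocks A)) \<and>
     (\<forall>(q, g) \<in> init A. q \<in> states A \<and> guard_clocks g \<subseteq> clocks A) \<and>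
     buchi A \<subseteq> states A"

definition prog_of :: "'s \<times> 'a \<times> 'c prog \<times> 's \<Rightarrow> 'c prog" where
  "prog_of t = fst (snd (snd t))"

definition released :: "'c \<Rightarrow> 's \<times> 'a \<times> 'c prog \<times> 's \<Rightarrow> bool" where
  "released x t \<longleftrightarrow> (\<exists>R. Change R \<in> set (prog_of t) \<and> x \<in> R)"

definition diag_clocks :: "('s, 'a, 'c) gta \<Rightarrow> 'c set" where
  "diag_clocks A = {z \<in> fclocks A. \<exists>t \<in> trans A. \<exists>g. Guard g \<in> set (prog_of t) \<and>
      (\<exists>x y s c. Atom (Clk x) (Clk y) s c \<in> set g \<and> x \<in> fclocks A \<and> y \<in> fclocks A
                 \<and> (z = x \<or> z = y))}"

definition safe :: "('s, 'a, 'c) gta \<Rightarrow> bool" where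
  "safe A \<longleftrightarrow>
     (\<forall>t \<in> trans A. \<forall>p1 R p2 x. prog_of t = p1 @ Change R # p2 \<and> x \<in> R \<and> x \<in> diag_clocks A \<longrightarrow>
        (\<exists>g. Guard g \<in> set p1 \<and>
             (\<forall>v. is_val A v \<and> sat v g \<longrightarrow> v x = 0 \<or> v x = -\<infinity>))) \<and>
     (\<forall>(q, g) \<in> init A. \<forall>x \<in> hclocks A.
        \<forall>v. is_val A v \<and> sat v g \<longrightarrow> v x = 0 \<or> v x = \<infinity>)"

definition is_run :: "('s, 'a, 'c) gta \<Rightarrow> (nat \<Rightarrow> 's) \<Rightarrow> (nat \<Rightarrow> 'c val) \<Rightarrow> (nat \<Rightarrow> real)
     \<Rightarrow> (nat \<Rightarrow> 's \<times> 'a \<times> 'c prog \<times> 's) \<Rightarrow> bool" where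
  "is_run A q v d t \<longleftrightarrow>
     (\<exists>g0. (q 0, g0) \<in> init A \<and> sat (v 0) g0) \<and> is_val A (v 0) \<and>
     (\<forall>i. d i \<ge> 0 \<and> is_val A (delay A (v i) (d i)) \<and> t i \<in> trans A \<and>
          (\<exists>a p. t i = (q i, a, p, q (Suc i)) \<and> prog_sem A p (delay A (v i) (d i)) (v (Suc i))))"

definition non_zeno :: "(nat \<Rightarrow> real) \<Rightarrow> bool" where
  "non_zeno d \<longleftrightarrow> (\<forall>B. \<exists>n. (\<Sum>i<n. d i) > B)"

end

theory Submission
  imports Defs
begin

text \<open>A future clock that is never released again only advances with time, and it must stay
  non-positive.  So if its value at position i is finite, the total delay from i onwards is
  bounded by minus that value, which contradicts non-Zenoness.\<close>

lemma prog_sem_unchanged: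
  assumes "prog_sem A p w w'" and "\<forall>R. Change R \<in> set p \<longrightarrow> x \<notin> R"
  shows "w' x = w x"
  using assms
proof (induction p arbitrary: w)
  case Nil
  then show ?case by simp
next
  case (Cons instr p)
  show ?case
  proof (cases instr)
    case (Guard g)
    with Cons show ?thesis by simp
  next
    case (Change R)
    with Cons.prems obtain u where u: "u \<in> change A R w" "prog_sem A p u w'" by auto
    from Cons.prems Change have "x \<notin> R" by auto
    with u(1) have "u x = w x" by (simp add: change_def)
    moreover from Cons.IH[OF u(2)] Cons.prems have "w' x = u x" by auto
    ultimately show ?thesis by simp
  qed
qed

lemma run_delay_nonneg:
  assumes "is_run A q v d t"
  shows "d j \<ge> 0"
  using assms by (simp add: is_run_def)

lemma run_fclock_delay_nonpos:
  assumes "is_run A q v d t" and "x \<in> fclocks A"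
  shows "v j x + ereal (d j) \<le> 0"
proof -
  from assms(1) have "is_val A (delay A (v j) (d j))" by (simp add: is_run_def)
  with assms(2) show ?thesis by (simp add: is_val_def delay_def clocks_def)
qed

lemma run_fclock_nonpos:
  assumes "is_run A q v d t" and "x \<in> fclocks A"
  shows "v j x \<le> 0"
proof -
  have "v j x \<le> v j x + ereal (d j)"
    using run_delay_nonneg[OF assms(1)] by (simp add: add_increasing2)
  also have "\<dots> \<le> 0" using run_fclock_delay_nonpos[OF assms] .
  finally show ?thesis .
qed

lemma run_unreleased_step:
  assumes "is_run A q v d t" and "x \<in> clocks A" and "\<not> released x (t j)"
  shows "v (Suc j) x = v j x + ereal (d j)"
proof -
  from assms(1) obtain a p where tj: "t j = (q j, a, p, q (Suc j))"
    and sem: "prog_sem A p (delay A (v j) (d j)) (v (Suc j))"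
    unfolding is_run_def by blast
  from assms(3) tj have "\<forall>R. Change R \<in> set p \<longrightarrow> x \<notin> R"
    by (auto simp: released_def prog_of_def)
  with sem have "v (Suc j) x = delay A (v j) (d j) x" by (rule prog_sem_unchanged)
  with assms(2) show ?thesis by (simp add: delay_def)
qed

lemma run_unreleased_elapse:
  assumes "is_run A q v d t" and "x \<in> clocks A"
    and "\<forall>j\<in>{i..<i + k}. \<not> released x (t j)"
  shows "v (i + k) x = v i x + ereal (\<Sum>j\<in>{i..<i + k}. d j)"
  using assms(3)
proof (induction k)
  case 0
  then show ?case by (simp add: zero_ereal_def)
next
  case (Suc k)
  then have "v (i + Suc k) x = v (i + k) x + ereal (d (i + k))"
    using run_unreleased_step[OF assms(1,2)] by simp
  also have "\<dots> = v i x + ereal (\<Sum>j\<in>{i..<i + Suc k}. d j)"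
    using Suc by (simp add: add.assoc)
  finally show ?case .
qed

lemma non_zeno_tail_unbounded:
  fixes d :: "nat \<Rightarrow> real"
  assumes "non_zeno d" and "\<And>j. d j \<ge> 0"
  shows "\<exists>n\<ge>i. (\<Sum>j\<in>{i..<n}. d j) > B"
proof -
  from assms(1) obtain n where n: "(\<Sum>j<n. d j) > \<bar>B\<bar> + (\<Sum>j<i. d j)"
    unfolding non_zeno_def by blast
  have "i \<le> n"
  proof (rule ccontr)
    assume "\<not> i \<le> n"
    then have "(\<Sum>j<n. d j) \<le> (\<Sum>j<i. d j)"
      by (intro sum_mono2) (auto simp: assms(2))
    with n show False by simp
  qed
  moreover from \<open>i \<le> n\<close> have "(\<Sum>j<n. d j) = (\<Sum>j<i. d j) + (\<Sum>j\<in>{i..<n}. d j)"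
    by (metis atLeast0LessThan sum.atLeastLessThan_concat zero_le)
  ultimately show ?thesis using n by auto
qed

theorem lemma6:
  fixes A :: "('s, 'a, 'c) gta"
  assumes "wf_gta A" and "safe A"
    and "is_run A q v d t" and "non_zeno d"
    and "x \<in> fclocks A" and "v i x \<noteq> -\<infinity>"
  shows "\<exists>j\<ge>i. released x (t j)"
proof (rule ccontr)
  assume "\<not> (\<exists>j\<ge>i. released x (t j))"
  then have unreleased: "\<forall>j\<in>{i..<i + k}. \<not> released x (t j)" for k by auto
  have x_clock: "x \<in> clocks A" using assms(5) by (simp add: clocks_def)
  from assms(6) run_fclock_nonpos[OF assms(3,5), of i] obtain r where r: "v i x = ereal r"
    by (cases "v i x") auto
  obtain n where "n \<ge> i" and n: "(\<Sum>j\<in>{i..<n}. d j) > - r"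
    using non_zeno_tail_unbounded[OF assms(4) run_delay_nonneg[OF assms(3)]] by blast
  then have "v n x = ereal (r + (\<Sum>j\<in>{i..<n}. d j))"
    using run_unreleased_elapse[OF assms(3) x_clock unreleased, of "n - i"] r by simp
  with run_fclock_nonpos[OF assms(3,5), of n] n show False by simp
qed

end
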